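(* Let $\rho_1,\dots,\rho_M>0$ and $\zeta_1,\dots,\zeta_M\in\mathbb C$ be such that the closed disks $\overline{B_{\rho_k}(\zeta_k)}$ are pairwise disjoint, and let $\mathcal D=\mathbb C\setminus\bigcup_k\overline{B_{\rho_k}(\zeta_k)}$. Let $f$ be an injective conformal map on $\overline{\mathcal D}$ (holomorphic, $C^1$ up to the boundary, $\partial_\zeta f\neq0$) with $f(\zeta)=\zeta+O(1/\zeta)$ as $\zeta\to\infty$, and $w$ a (possibly multivalued) holomorphic function on $\mathcal D$ with $\partial_\zeta w$ single-valued, continuous up to $\partial\mathcal D$, and $\partial_\zeta w=O(1/\zeta)$ as $\zeta\to\infty$. Let $c\in\mathbb R$ and $U=\partial_\zeta w/\partial_\zeta f-c$ (translating case, $\Omega=0$), and suppose that the kinematic and Bernoulli conditions hold on each $\partial B_{\rho_k}(\zeta_k)$, i.e. this is a translating hollow vortex configuration. Then $|c|\le M\sup_{\partial\mathcal D}|U|$; in particular $|c|\le M\,N_{\mathrm{vel}}$ where $N_{\mathrm{vel}}=\sup_{\partial\mathcal D}(|U|+1/|U|)$.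
   Context: Kinematic condition: $\operatorname{Re}((\zeta-\zeta_k)\partial_\zeta f\,U)=0$ on $\partial B_{\rho_k}(\zeta_k)$; Bernoulli condition: $|U|$ is constant on each $\partial B_{\rho_k}(\zeta_k)$. ($\overline U$ is the relative velocity in the frame translating with speed $c$.) *)

theory Defs
  imports "HOL-Complex_Analysis.Complex_Analysis" "HOL-Library.Landau_Symbols"
begin

definition hv_domain :: "nat \<Rightarrow> (nat \<Rightarrow> complex) \<Rightarrow> (nat \<Rightarrow> real) \<Rightarrow> complex set" where
  "hv_domain M zc r = - (\<Union>k<M. cball (zc k) (r k))"

text \<open>Relative velocity (conjugate) U = dw/f' - c, where W is the single-valued
  derivative of the (possibly multivalued) complex potential w and f' is the derivative of f.\<close>
definition hv_U :: "(complex \<Rightarrow> complex) \<Rightarrow> (complex \<Rightarrow> complex) \<Rightarrow> real \<Rightarrow> complex \<Rightarrow> complex" where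
  "hv_U W f' c z = W z / f' z - complex_of_real c"

end

theory Submission
  imports Defs
begin

text \<open>The relative velocity U is holomorphic in the exterior domain, continuous up to the
  boundary circles, and tends to -c at infinity, since W \<rightarrow> 0 and f' \<rightarrow> 1 (a Cauchy estimate
  applied to f z - z = O(1/z)). A maximum modulus principle for this unbounded domain then gives
  \<bar>c\<bar> \<le> sup |U| over the boundary, which is stronger than the claim because M \<ge> 1.\<close>

lemma open_hv_domain: "open (hv_domain M zc r)"
  unfolding hv_domain_def by (intro open_Compl closed_UN) auto

lemma hv_domain_contains_exterior:
  obtains R where "- cball 0 R \<subseteq> hv_domain M zc r"
proof -
  have "bounded (\<Union>k<M. cball (zc k) (r k))"
    by (intro bounded_UN) auto
  then obtain R where "\<And>x. x \<in> (\<Union>k<M. cball (zc k) (r k)) \<Longrightarrow> norm x \<le> R"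
    unfolding bounded_pos by blast
  with that[of R] show ?thesis
    unfolding hv_domain_def by fastforce
qed

lemma centre_notin_closure_hv_domain:
  assumes "k < M" and "r k > 0"
  shows "zc k \<notin> closure (hv_domain M zc r)"
proof -
  have "ball (zc k) (r k) \<inter> hv_domain M zc r = {}"
    using assms(1) unfolding hv_domain_def by (fastforce dest: ball_subset_cball[THEN subsetD])
  then have "ball (zc k) (r k) \<inter> closure (hv_domain M zc r) = {}"
    by (simp add: open_Int_closure_eq_empty)
  with assms(2) show ?thesis
    using centre_in_ball by blast
qed

lemma frontier_hv_domain_subset:
  "frontier (hv_domain M zc r) \<subseteq> (\<Union>k<M. sphere (zc k) (r k))"
proof -
  have "frontier (hv_domain M zc r) = frontier (\<Union>k<M. cball (zc k) (r k))"
    unfolding hv_domain_def by (rule frontier_complement)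
  also have "\<dots> \<subseteq> (\<Union>k<M. frontier (cball (zc k) (r k)))"
    using frontier_Union_subset[of "(\<lambda>k. cball (zc k) (r k)) ` {..<M}"] by (simp add: image_image)
  finally show ?thesis
    by simp
qed

lemma finite_image_frontier_hv_domain:
  assumes "\<forall>k<M. \<exists>B. \<forall>z\<in>sphere (zc k) (r k). g z = B"
  shows "finite (g ` frontier (hv_domain M zc r))"
proof -
  from assms obtain B where B: "\<And>k z. k < M \<Longrightarrow> z \<in> sphere (zc k) (r k) \<Longrightarrow> g z = B k"
    by metis
  have "g ` frontier (hv_domain M zc r) \<subseteq> B ` {..<M}"
    using frontier_hv_domain_subset B by fastforce
  then show ?thesis
    by (rule finite_subset) simp
qed

lemma frontier_hv_domain_nonempty:
  assumes "k < M" and "r k > 0"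
  shows "frontier (hv_domain M zc r) \<noteq> {}"
proof (rule frontier_not_empty)
  obtain R where "- cball 0 R \<subseteq> hv_domain M zc r"
    by (rule hv_domain_contains_exterior)
  then have "complex_of_real (\<bar>R\<bar> + 1) \<in> hv_domain M zc r"
    by auto
  then show "hv_domain M zc r \<noteq> {}"
    by blast
  show "hv_domain M zc r \<noteq> UNIV"
    using centre_notin_closure_hv_domain[of k M r zc] assms closure_subset by blast
qed

lemma bigo_inverse_imp_tendsto_0:
  fixes g :: "'a::real_normed_field \<Rightarrow> 'a"
  assumes "g \<in> O[at_infinity](\<lambda>z. 1 / z)"
  shows "(g \<longlongrightarrow> 0) at_infinity"
proof -
  have "(\<lambda>z::'a. 1 / z) \<in> o[at_infinity](\<lambda>_. 1)"
  proof (rule smalloI_tendsto)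
    have "(\<lambda>z::'a. 1 / z) = inverse"
      by (simp add: fun_eq_iff divide_inverse)
    then show "((\<lambda>z::'a. 1 / z / 1) \<longlongrightarrow> 0) at_infinity"
      using tendsto_inverse_0 by simp
  qed simp
  from smalloD_tendsto[OF landau_o.big_small_trans[OF assms this]] show ?thesis
    by simp
qed

lemma deriv_tendsto_0_at_infinity:
  fixes g :: "complex \<Rightarrow> complex"
  assumes holo: "g holomorphic_on - cball 0 R" and lim: "(g \<longlongrightarrow> 0) at_infinity"
  shows "(deriv g \<longlongrightarrow> 0) at_infinity"
proof (rule tendstoI)
  fix e :: real
  assume "e > 0"
  then have "\<forall>\<^sub>F w in at_infinity. norm (g w) < e / 2"
    using tendstoD[OF lim, of "e / 2"] by simp
  then obtain R' where R': "\<And>w. R' \<le> norm w \<Longrightarrow> norm (g w) < e / 2"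
    unfolding eventually_at_infinity by blast
  show "\<forall>\<^sub>F z in at_infinity. dist (deriv g z) 0 < e"
    unfolding eventually_at_infinity
  proof (intro exI allI impI)
    fix z :: complex
    assume z: "max R' R + 2 \<le> norm z"
    have far: "R' \<le> norm w \<and> R < norm w" if "w \<in> cball z 1" for w
    proof -
      have "norm (z - w) \<le> 1"
        using that by (simp add: dist_norm)
      then show ?thesis
        using z norm_triangle_sub[of z w] max.cobounded1[of R' R] max.cobounded2[of R R'] by linarith
    qed
    then have sub: "cball z 1 \<subseteq> - cball 0 R"
      by (auto dest!: far)
    have "g holomorphic_on ball z 1"
      by (rule holomorphic_on_subset[OF holo]) (use sub ball_subset_cball in blast)
    moreover have "continuous_on (cball z 1) g"
      by (rule continuous_on_subset[OF holomorphic_on_imp_continuous_on[OF holo] sub])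
    moreover have "norm (g w) \<le> e / 2" if "norm (z - w) = 1" for w
    proof -
      have "w \<in> cball z 1"
        using that by (simp add: dist_norm)
      then show ?thesis
        using far R' less_imp_le by blast
    qed
    ultimately have "norm ((deriv ^^ 1) g z) \<le> fact 1 * (e / 2) / 1 ^ 1"
      by (rule Cauchy_inequality[OF _ _ zero_less_one])
    with \<open>e > 0\<close> show "dist (deriv g z) 0 < e"
      by simp
  qed
qed

lemma deriv_tendsto_1_at_infinity:
  fixes f f' :: "complex \<Rightarrow> complex"
  assumes deriv: "\<And>z. z \<in> - cball 0 R \<Longrightarrow> (f has_field_derivative f' z) (at z)"
    and asymp: "(\<lambda>z. f z - z) \<in> O[at_infinity](\<lambda>z. 1 / z)"
  shows "(f' \<longlongrightarrow> 1) at_infinity"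
proof -
  define g where "g z = f z - z" for z
  have g_deriv: "(g has_field_derivative f' z - 1) (at z)" if "z \<in> - cball 0 R" for z
    unfolding g_def using deriv[OF that] by (auto intro!: derivative_eq_intros)
  then have "g holomorphic_on - cball 0 R"
    by (subst holomorphic_on_open) blast+
  then have "(deriv g \<longlongrightarrow> 0) at_infinity"
    using deriv_tendsto_0_at_infinity bigo_inverse_imp_tendsto_0[OF asymp] unfolding g_def by blast
  then have "((\<lambda>z. deriv g z + 1) \<longlongrightarrow> 1) at_infinity"
    using tendsto_add[OF _ tendsto_const[of 1]] by fastforce
  moreover have "\<forall>\<^sub>F z in at_infinity. deriv g z + 1 = f' z"
    unfolding eventually_at_infinity
    using g_deriv[THEN DERIV_imp_deriv] by (intro exI[of _ "R + 1"]) auto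
  ultimately show ?thesis
    by (rule Lim_transform_eventually)
qed

lemma holomorphic_on_hv_U:
  assumes "open D" and f_deriv: "\<And>z. z \<in> D \<Longrightarrow> (f has_field_derivative f' z) (at z)"
    and "W holomorphic_on D" and "\<And>z. z \<in> D \<Longrightarrow> f' z \<noteq> 0"
  shows "hv_U W f' c holomorphic_on D"
proof -
  have "f holomorphic_on D"
    using f_deriv holomorphic_on_open[OF \<open>open D\<close>] by blast
  then have "f' holomorphic_on D"
    by (rule holomorphic_transform[OF holomorphic_deriv[OF _ \<open>open D\<close>]])
       (use f_deriv DERIV_imp_deriv in auto)
  then show ?thesis
    unfolding hv_U_def using assms by (auto intro!: holomorphic_intros)
qed

lemma tendsto_hv_U_at_infinity:
  assumes "\<And>z. z \<in> - cball 0 R \<Longrightarrow> (f has_field_derivative f' z) (at z)"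
    and "(\<lambda>z. f z - z) \<in> O[at_infinity](\<lambda>z. 1 / z)" and "W \<in> O[at_infinity](\<lambda>z. 1 / z)"
  shows "(hv_U W f' c \<longlongrightarrow> - of_real c) at_infinity"
proof -
  have "((\<lambda>z. W z / f' z - of_real c) \<longlongrightarrow> 0 / 1 - of_real c) at_infinity"
    using bigo_inverse_imp_tendsto_0[OF assms(3)] deriv_tendsto_1_at_infinity[OF assms(1,2)]
    by (intro tendsto_intros) auto
  then show ?thesis
    by (simp add: hv_U_def[abs_def])
qed

lemma le_if_power_le_const_mult:
  fixes a b C :: real
  assumes "0 \<le> b" and "\<And>n. a ^ n \<le> C * b ^ n"
  shows "a \<le> b"
proof (rule ccontr)
  assume "\<not> a \<le> b"
  show False
  proof (cases "b = 0")
    case True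
    with assms(2)[of 1] \<open>\<not> a \<le> b\<close> show False
      by simp
  next
    case False
    with \<open>0 \<le> b\<close> \<open>\<not> a \<le> b\<close> have "b > 0" "a / b > 1"
      by auto
    then obtain n where "C < (a / b) ^ n"
      using real_arch_pow by blast
    with \<open>b > 0\<close> have "C * b ^ n < a ^ n"
      by (simp add: power_divide pos_less_divide_eq)
    with assms(2)[of n] show False
      by simp
  qed
qed

text \<open>The factor 1/(w - p) makes U^n/(w - p) small on large circles, so the maximum modulus
  principle applies on the bounded sets D \<inter> ball 0 R; the constant S^n/\<rho> disappears on taking
  n-th roots as n \<rightarrow> \<infinity>.\<close>

lemma exterior_maximum_modulus_power:
  fixes U :: "complex \<Rightarrow> complex"
  assumes "open D" and holo: "U holomorphic_on D" and cont: "continuous_on (closure D) U"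
    and "\<rho> > 0" and dist_p: "\<And>w. w \<in> closure D \<Longrightarrow> \<rho> \<le> norm (w - p)"
    and "0 \<le> K" and far: "\<And>w. R1 \<le> norm w \<Longrightarrow> norm (U w) \<le> K"
    and "0 \<le> S" and frontier: "\<And>w. w \<in> frontier D \<Longrightarrow> norm (U w) \<le> S"
    and "z \<in> D"
  shows "norm (U z) ^ n \<le> S ^ n / \<rho> * norm (z - p)"
proof -
  define F where "F w = U w ^ n / (w - p)" for w
  have "norm (F z) \<le> S ^ n / \<rho> + \<delta>" if "\<delta> > 0" for \<delta>
  proof -
    define R where "R = max R1 (norm z) + norm p + K ^ n / \<delta> + 1"
    have "0 \<le> K ^ n / \<delta>"
      using \<open>0 \<le> K\<close> \<open>\<delta> > 0\<close> by simp
    then have R: "R1 \<le> R" "norm z < R" "K ^ n / \<delta> < R - norm p"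
      unfolding R_def by (smt (verit) norm_ge_zero)+
    define T where "T = D \<inter> ball 0 R"
    have closure_T: "closure T \<subseteq> closure D"
      by (simp add: T_def closure_mono)
    have p_notin: "w - p \<noteq> 0" if "w \<in> closure T" for w
      using dist_p[of w] that closure_T \<open>\<rho> > 0\<close> by force
    show ?thesis
    proof (rule maximum_modulus_frontier[of F T])
      have "interior T = T"
        using \<open>open D\<close> by (simp add: T_def interior_open open_Int)
      then show "F holomorphic_on interior T"
        unfolding F_def using holomorphic_on_subset[OF holo] p_notin closure_subset[of T]
        by (auto simp: T_def intro!: holomorphic_intros)
      show "continuous_on (closure T) F"
        unfolding F_def using p_notin
        by (intro continuous_on_divide continuous_on_power continuous_on_subset[OF cont closure_T]
            continuous_intros) auto
      show "bounded T"
        by (simp add: T_def bounded_Int)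
      show "z \<in> T"
        using \<open>z \<in> D\<close> R(2) by (simp add: T_def)
      fix w
      assume "w \<in> frontier T"
      moreover have "R > 0"
        using R(2) norm_ge_zero[of z] by linarith
      ultimately have "w \<in> closure D" "w \<in> frontier D \<or> w \<in> sphere 0 R"
        using closure_T frontier_Int_subset[of D "ball 0 R"] frontier_def[of T]
        by (auto simp: T_def)
      then have dist_w: "\<rho> \<le> norm (w - p)" and w: "w \<in> frontier D \<or> norm w = R"
        using dist_p by auto
      have norm_F: "norm (F w) = norm (U w) ^ n / norm (w - p)"
        by (simp add: F_def norm_divide norm_power)
      from w show "norm (F w) \<le> S ^ n / \<rho> + \<delta>"
      proof
        assume "w \<in> frontier D"
        then have "norm (U w) ^ n \<le> S ^ n"
          using frontier by (simp add: power_mono)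
        then have "norm (U w) ^ n / norm (w - p) \<le> S ^ n / \<rho>"
          using dist_w \<open>\<rho> > 0\<close> \<open>0 \<le> S\<close> by (intro frac_le) simp_all
        with norm_F \<open>\<delta> > 0\<close> show ?thesis
          by linarith
      next
        assume "norm w = R"
        then have "R - norm p \<le> norm (w - p)"
          using norm_triangle_ineq2[of w p] by simp
        moreover have "norm (U w) ^ n \<le> K ^ n"
          using far[of w] R(1) \<open>norm w = R\<close> by (simp add: power_mono)
        moreover have "R - norm p > 0"
          using R(3) \<open>0 \<le> K ^ n / \<delta>\<close> by linarith
        ultimately have "norm (U w) ^ n / norm (w - p) \<le> K ^ n / (R - norm p)"
          using \<open>0 \<le> K\<close> by (intro frac_le) simp_all
        also have "\<dots> \<le> \<delta>"
          using R(3) \<open>\<delta> > 0\<close> \<open>R - norm p > 0\<close> by (simp add: divide_less_eq pos_divide_le_eq mult.commute)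
        finally show ?thesis
          using norm_F \<open>\<rho> > 0\<close> \<open>0 \<le> S\<close> by (simp add: add_increasing)
      qed
    qed
  qed
  then have "norm (F z) \<le> S ^ n / \<rho>"
    by (rule field_le_epsilon)
  moreover have "norm (z - p) > 0"
    using dist_p[of z] \<open>z \<in> D\<close> closure_subset[of D] \<open>\<rho> > 0\<close> by force
  ultimately show ?thesis
    by (simp add: F_def norm_divide norm_power divide_le_eq)
qed

lemma exterior_maximum_modulus:
  fixes U :: "complex \<Rightarrow> complex"
  assumes "open D" and "U holomorphic_on D" and "continuous_on (closure D) U"
    and "p \<notin> closure D"
    and bounded: "\<forall>\<^sub>F w in at_infinity. norm (U w) \<le> K"
    and frontier: "\<And>w. w \<in> frontier D \<Longrightarrow> norm (U w) \<le> S"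
    and "z \<in> D"
  shows "norm (U z) \<le> S"
proof -
  obtain \<rho> where "\<rho> > 0" "ball p \<rho> \<subseteq> - closure D"
    using \<open>p \<notin> closure D\<close> open_contains_ball[of "- closure D"] by blast
  then have dist_p: "\<rho> \<le> norm (w - p)" if "w \<in> closure D" for w
    using that by (force simp: dist_norm norm_minus_commute)
  obtain R1 where far: "\<And>w. R1 \<le> norm w \<Longrightarrow> norm (U w) \<le> max K 0"
    using bounded unfolding eventually_at_infinity by force
  have "frontier D \<noteq> {}"
    using \<open>z \<in> D\<close> \<open>p \<notin> closure D\<close> closure_subset[of D] by (intro frontier_not_empty) auto
  then have "0 \<le> S"
    using frontier by (meson ex_in_conv norm_ge_zero order_trans)
  have "norm (U z) ^ n \<le> norm (z - p) / \<rho> * S ^ n" for n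
    using exterior_maximum_modulus_power[OF assms(1-3) \<open>\<rho> > 0\<close> dist_p max.cobounded2 far
        \<open>0 \<le> S\<close> frontier \<open>z \<in> D\<close>, where n = n]
    by (simp add: mult.commute)
  then show ?thesis
    using \<open>0 \<le> S\<close> by (rule le_if_power_le_const_mult[rotated])
qed

lemma norm_limit_at_infinity_le_frontier_bound:
  fixes U :: "complex \<Rightarrow> complex"
  assumes "open D" and "U holomorphic_on D" and "continuous_on (closure D) U"
    and "p \<notin> closure D" and "- cball 0 R \<subseteq> D"
    and lim: "(U \<longlongrightarrow> l) at_infinity"
    and "\<And>w. w \<in> frontier D \<Longrightarrow> norm (U w) \<le> S"
  shows "norm l \<le> S"
proof (rule Lim_norm_ubound[OF _ lim])
  have "\<forall>\<^sub>F w in at_infinity. norm (U w) \<le> norm l + 1"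
    using order_tendstoD(2)[OF tendsto_norm[OF lim], of "norm l + 1"] by (auto elim: eventually_mono)
  moreover have "\<forall>\<^sub>F w in at_infinity. w \<in> D"
    using \<open>- cball 0 R \<subseteq> D\<close> unfolding eventually_at_infinity by (intro exI[of _ "R + 1"]) auto
  ultimately show "\<forall>\<^sub>F w in at_infinity. norm (U w) \<le> S"
    by (auto elim: eventually_mono intro: exterior_maximum_modulus[OF assms(1-4) _ assms(7)])
qed (use trivial_limit_at_infinity in simp)

theorem proposition7p7:
  fixes M :: nat and zc :: "nat \<Rightarrow> complex" and r :: "nat \<Rightarrow> real"
    and f f' W :: "complex \<Rightarrow> complex" and c :: real
  assumes M_pos: "M \<ge> 1"
    and r_pos: "\<forall>k<M. r k > 0"
    and disjoint: "\<forall>j<M. \<forall>k<M. j \<noteq> k \<longrightarrow> cball (zc j) (r j) \<inter> cball (zc k) (r k) = {}"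
    and f_deriv: "\<forall>z\<in>closure (hv_domain M zc r).
                    (f has_field_derivative f' z) (at z within closure (hv_domain M zc r))"
    and f'_cont: "continuous_on (closure (hv_domain M zc r)) f'"
    and f'_nz: "\<forall>z\<in>closure (hv_domain M zc r). f' z \<noteq> 0"
    and f_inj: "inj_on f (closure (hv_domain M zc r))"
    and f_infty: "(\<lambda>z. f z - z) \<in> O[at_infinity](\<lambda>z. 1 / z)"
    and W_holo: "W holomorphic_on hv_domain M zc r"
    and W_cont: "continuous_on (closure (hv_domain M zc r)) W"
    and W_infty: "W \<in> O[at_infinity](\<lambda>z. 1 / z)"
    and kinematic: "\<forall>k<M. \<forall>z\<in>sphere (zc k) (r k).
                      Re ((z - zc k) * f' z * hv_U W f' c z) = 0"
    and bernoulli: "\<forall>k<M. \<exists>B. \<forall>z\<in>sphere (zc k) (r k). norm (hv_U W f' c z) = B"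
  shows "\<bar>c\<bar> \<le> real M * (SUP z\<in>frontier (hv_domain M zc r). norm (hv_U W f' c z))
       \<and> \<bar>c\<bar> \<le> real M * (SUP z\<in>frontier (hv_domain M zc r).
                              norm (hv_U W f' c z) + 1 / norm (hv_U W f' c z))"
proof -
  define D where "D = hv_domain M zc r"
  define U where "U = hv_U W f' c"
  define S where "S = (SUP z\<in>frontier D. norm (U z))"
  have "open D"
    unfolding D_def by (rule open_hv_domain)
  obtain R where exterior: "- cball 0 R \<subseteq> D"
    unfolding D_def by (rule hv_domain_contains_exterior)
  have f_deriv_D: "(f has_field_derivative f' z) (at z)" if "z \<in> D" for z
    using f_deriv that closure_subset[of D] at_within_open[OF that \<open>open D\<close>]
    unfolding D_def by (metis DERIV_subset subsetD)
  have U_holo: "U holomorphic_on D"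
    unfolding U_def using \<open>open D\<close> f_deriv_D W_holo f'_nz closure_subset[of D]
    by (intro holomorphic_on_hv_U) (auto simp: D_def)
  have U_cont: "continuous_on (closure D) U"
    unfolding U_def hv_U_def using W_cont f'_cont f'_nz
    by (auto intro!: continuous_intros simp: D_def)
  have U_lim: "(U \<longlongrightarrow> - of_real c) at_infinity"
    unfolding U_def using f_deriv_D exterior f_infty W_infty
    by (intro tendsto_hv_U_at_infinity) auto
  have fin: "finite ((\<lambda>z. norm (U z)) ` frontier D)"
    unfolding D_def U_def using bernoulli by (rule finite_image_frontier_hv_domain)
  have bdd: "bdd_above ((\<lambda>z. norm (U z)) ` frontier D)"
    "bdd_above ((\<lambda>z. norm (U z) + 1 / norm (U z)) ` frontier D)"
    using bdd_above_finite[OF fin] bdd_above_finite[OF finite_imageI[OF fin, of "\<lambda>x. x + 1 / x"]]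
    by (simp_all add: image_image)
  have "zc 0 \<notin> closure D"
    unfolding D_def using M_pos r_pos by (intro centre_notin_closure_hv_domain) auto
  then have "\<bar>c\<bar> \<le> S"
    using norm_limit_at_infinity_le_frontier_bound[OF \<open>open D\<close> U_holo U_cont _ exterior U_lim]
      cSUP_upper[OF _ bdd(1)] unfolding S_def by simp
  have "frontier D \<noteq> {}"
    unfolding D_def using M_pos r_pos by (intro frontier_hv_domain_nonempty) auto
  then have "S \<le> (SUP z\<in>frontier D. norm (U z) + 1 / norm (U z))"
    unfolding S_def by (rule cSUP_mono[OF _ bdd(2)]) (force intro: bexI)
  then have "real M * S \<le> real M * (SUP z\<in>frontier D. norm (U z) + 1 / norm (U z))"
    by (rule mult_left_mono) simp
  moreover have "S \<le> real M * S"
    using M_pos \<open>\<bar>c\<bar> \<le> S\<close> mult_right_mono[of 1 "real M" S] by simp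
  ultimately show ?thesis
    using \<open>\<bar>c\<bar> \<le> S\<close> unfolding S_def D_def U_def by linarith
qed

end
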